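(* Let $F:\mathbb{R}^n\rightrightarrows\mathbb{R}^n$ be continuous with $F(x)$ nonempty, compact and convex for all $x$, and assume $\Sigma:\dot x\in F(x)$ is forward complete. Let $X_o\subset\mathbb{R}^n$, let $\bar\epsilon:\mathbb{R}^n\to\mathbb{R}_{>0}$ be continuous, and let $K_{\bar\epsilon}$ be the reachable set defined below. Then for each continuous $\epsilon:\mathbb{R}^n\to\mathbb{R}_{\ge0}$ with $\epsilon(x)<\bar\epsilon(x)$ for all $x\in\mathbb{R}^n$: (P1) $\mathrm{cl}(K_{\bar\epsilon})$ is forward contractive for $\Sigma_\epsilon$; (P2) $\mathbb{R}^n\setminus\mathrm{int}(K_{\bar\epsilon})$ is forward contractive for $\Sigma^-_\epsilon$; (P3) solutions of $\Sigma_\epsilon$ starting in $\mathrm{int}(K_{\bar\epsilon})$ never reach $\partial K_{\bar\epsilon}$ at positive times; (P4) solutions of $\Sigma_\epsilon$ starting in $\mathbb{R}^n\setminus\mathrm{cl}(K_{\bar\epsilon})$ never reach $\partial K_{\bar\epsilon}$ at negative times.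
   Context: $\mathbb{B}$ is the closed unit ball. Continuity of a set-valued map means upper and lower semicontinuity. Solutions of a differential inclusion are locally absolutely continuous functions on an interval containing $0$ (possibly including negative times) satisfying the inclusion a.e.; maximal solutions are non-extendable; $\mathcal{S}_{\Sigma'}(x)$ is the set of maximal solutions of $\Sigma'$ with $\phi(0)=x$. Forward complete: every maximal solution is defined on an interval unbounded to the right. $\Sigma_\epsilon$: $\dot x\in F(x)+\epsilon(x)\mathbb{B}$; $\Sigma^-_\epsilon$: $\dot x\in -F(x)+\epsilon(x)\mathbb{B}$. For $t\ge0$, $R_{\Sigma'}(t,x):=\{\phi(s):\phi\in\mathcal{S}_{\Sigma'}(x),\ s\in\mathrm{dom}\,\phi\cap[0,t]\}$. $K_{\bar\epsilon}:=\bigcup_{t\ge0}\bigcup_{x\in X_o}R_{\Sigma_{\bar\epsilon}}(t,x)$. A closed set $K$ is forward invariant for $\Sigma'$ if every solution starting in $K$ stays in $K$; it is forward contractive if it is forward invariant and for every $x_o\in\partial K$ and $\phi\in\mathcal{S}_{\Sigma'}(x_o)$ there is $T>0$ with $\phi(t)\in\mathrm{int}(K)$ for all $t\in\mathrm{dom}\,\phi\cap(0,T]$. *)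

theory Defs
  imports "HOL-Analysis.Analysis"
begin

definition usc_at :: "('a::metric_space \<Rightarrow> 'b::topological_space set) \<Rightarrow> 'a \<Rightarrow> bool" where
  "usc_at F x \<longleftrightarrow> (\<forall>U. open U \<and> F x \<subseteq> U \<longrightarrow> (\<exists>\<delta>>0. \<forall>y\<in>ball x \<delta>. F y \<subseteq> U))"

definition lsc_at :: "('a::metric_space \<Rightarrow> 'b::topological_space set) \<Rightarrow> 'a \<Rightarrow> bool" where
  "lsc_at F x \<longleftrightarrow> (\<forall>U. open U \<and> F x \<inter> U \<noteq> {} \<longrightarrow> (\<exists>\<delta>>0. \<forall>y\<in>ball x \<delta>. F y \<inter> U \<noteq> {}))"

definition sv_continuous :: "('a::metric_space \<Rightarrow> 'b::topological_space set) \<Rightarrow> bool" where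
  "sv_continuous F \<longleftrightarrow> (\<forall>x. usc_at F x \<and> lsc_at F x)"

definition abs_cont_on :: "real set \<Rightarrow> (real \<Rightarrow> 'a::real_normed_vector) \<Rightarrow> bool" where
  "abs_cont_on S f \<longleftrightarrow>
     (\<forall>\<epsilon>>0. \<exists>\<delta>>0. \<forall>(n::nat) a b.
        (\<forall>k<n. a k \<le> b k \<and> a k \<in> S \<and> b k \<in> S) \<and>
        (\<forall>j<n. \<forall>k<n. j \<noteq> k \<longrightarrow> {a j<..<b j} \<inter> {a k<..<b k} = {}) \<and>
        (\<Sum>k<n. b k - a k) < \<delta>
        \<longrightarrow> (\<Sum>k<n. norm (f (b k) - f (a k))) < \<epsilon>)"

definition loc_abs_cont_on :: "real set \<Rightarrow> (real \<Rightarrow> 'a::real_normed_vector) \<Rightarrow> bool" where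
  "loc_abs_cont_on I f \<longleftrightarrow> (\<forall>a b. {a..b} \<subseteq> I \<longrightarrow> abs_cont_on {a..b} f)"

definition is_sol :: "('a::euclidean_space \<Rightarrow> 'a set) \<Rightarrow> real set \<Rightarrow> (real \<Rightarrow> 'a) \<Rightarrow> bool" where
  "is_sol G I \<phi> \<longleftrightarrow> is_interval I \<and> 0 \<in> I \<and> loc_abs_cont_on I \<phi> \<and>
     (\<exists>N. N \<in> null_sets lebesgue \<and>
        (\<forall>t\<in>I - N. \<exists>v. (\<phi> has_vector_derivative v) (at t within I) \<and> v \<in> G (\<phi> t)))"

definition is_max_sol :: "('a::euclidean_space \<Rightarrow> 'a set) \<Rightarrow> real set \<Rightarrow> (real \<Rightarrow> 'a) \<Rightarrow> bool" where
  "is_max_sol G I \<phi> \<longleftrightarrow> is_sol G I \<phi> \<and>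
     \<not> (\<exists>J \<psi>. is_sol G J \<psi> \<and> I \<subset> J \<and> (\<forall>t\<in>I. \<psi> t = \<phi> t))"

definition Sols :: "('a::euclidean_space \<Rightarrow> 'a set) \<Rightarrow> 'a \<Rightarrow> (real set \<times> (real \<Rightarrow> 'a)) set" where
  "Sols G x = {(I, \<phi>). is_max_sol G I \<phi> \<and> \<phi> 0 = x}"

definition forward_complete :: "('a::euclidean_space \<Rightarrow> 'a set) \<Rightarrow> bool" where
  "forward_complete G \<longleftrightarrow> (\<forall>x. \<forall>(I, \<phi>) \<in> Sols G x. \<not> bdd_above I)"

definition infl :: "('a::euclidean_space \<Rightarrow> 'a set) \<Rightarrow> ('a \<Rightarrow> real) \<Rightarrow> 'a \<Rightarrow> 'a set" where
  "infl F e x = {v + w | v w. v \<in> F x \<and> norm w \<le> e x}"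

definition infl_neg :: "('a::euclidean_space \<Rightarrow> 'a set) \<Rightarrow> ('a \<Rightarrow> real) \<Rightarrow> 'a \<Rightarrow> 'a set" where
  "infl_neg F e x = {- v + w | v w. v \<in> F x \<and> norm w \<le> e x}"

definition Reach :: "('a::euclidean_space \<Rightarrow> 'a set) \<Rightarrow> real \<Rightarrow> 'a \<Rightarrow> 'a set" where
  "Reach G t x = {\<phi> s | I \<phi> s. (I, \<phi>) \<in> Sols G x \<and> s \<in> I \<inter> {0..t}}"

definition Kset :: "('a::euclidean_space \<Rightarrow> 'a set) \<Rightarrow> ('a \<Rightarrow> real) \<Rightarrow> 'a set \<Rightarrow> 'a set" where
  "Kset F ebar Xo = (\<Union>t\<in>{0..}. \<Union>x\<in>Xo. Reach (infl F ebar) t x)"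

definition forward_invariant :: "('a::euclidean_space \<Rightarrow> 'a set) \<Rightarrow> 'a set \<Rightarrow> bool" where
  "forward_invariant G K \<longleftrightarrow> closed K \<and>
     (\<forall>I \<phi>. is_sol G I \<phi> \<and> \<phi> 0 \<in> K \<longrightarrow> (\<forall>t\<in>I. t \<ge> 0 \<longrightarrow> \<phi> t \<in> K))"

definition forward_contractive :: "('a::euclidean_space \<Rightarrow> 'a set) \<Rightarrow> 'a set \<Rightarrow> bool" where
  "forward_contractive G K \<longleftrightarrow> forward_invariant G K \<and>
     (\<forall>xo\<in>frontier K. \<forall>(I, \<phi>)\<in>Sols G xo. \<exists>T>0. \<forall>t\<in>I \<inter> {0<..T}. \<phi> t \<in> interior K)"

end

theory Submission
  imports Defs
begin

text \<open>
  The heart of the matter is that a solution of \<open>x' \<in> F x + eps x B\<close> starting in the closure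
  of \<open>K = Kset F ebar Xo\<close> lies in the interior of \<open>K\<close> at every later time. Along the compact
  trajectory the margin \<open>ebar - eps\<close> is bounded below, so by continuity of \<open>F\<close> and \<open>ebar\<close>,
  adding to the solution a sufficiently small affine function, one that moves its endpoints to
  arbitrary nearby points, yields a solution of \<open>x' \<in> F x + ebar x B\<close>. Starting such a perturbed
  solution at a point of \<open>K\<close> near the initial point and prepending an \<open>ebar\<close>-solution from \<open>Xo\<close>
  that reaches this point shows that a whole ball around the endpoint lies in \<open>K\<close>.
  Reversing time turns solutions of \<open>x' \<in> - F x + eps x B\<close> into solutions of the forward
  inclusion, which gives the statement for the complement of the interior of \<open>K\<close>.
\<close>

section \<open>Absolute continuity\<close>

definition short_interval_family ::
    "real set \<Rightarrow> nat \<Rightarrow> (nat \<Rightarrow> real) \<Rightarrow> (nat \<Rightarrow> real) \<Rightarrow> real \<Rightarrow> bool" where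
  "short_interval_family S n a b d \<longleftrightarrow> (\<forall>k<n. a k \<le> b k \<and> a k \<in> S \<and> b k \<in> S) \<and>
     (\<forall>j<n. \<forall>k<n. j \<noteq> k \<longrightarrow> {a j<..<b j} \<inter> {a k<..<b k} = {}) \<and>
     (\<Sum>k<n. b k - a k) < d"

lemma abs_cont_on_iff_short_interval_family:
  "abs_cont_on S f \<longleftrightarrow> (\<forall>e>0. \<exists>d>0. \<forall>n a b.
     short_interval_family S n a b d \<longrightarrow> (\<Sum>k<n. norm (f (b k) - f (a k))) < e)"
  unfolding abs_cont_on_def short_interval_family_def by blast

lemma short_interval_family_mono:
  assumes "short_interval_family S n a b d" "S \<subseteq> T" "d \<le> d'"
  shows "short_interval_family T n a b d'"
  using assms unfolding short_interval_family_def by fastforce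

lemma short_interval_family_shrink:
  assumes fam: "short_interval_family S n \<alpha> \<beta> d"
    and mem: "\<And>k. k < n \<Longrightarrow> \<alpha>' k \<le> \<beta>' k \<and> \<alpha>' k \<in> S' \<and> \<beta>' k \<in> S'"
    and sub: "\<And>k. k < n \<Longrightarrow> {\<alpha>' k<..<\<beta>' k} \<subseteq> {\<alpha> k<..<\<beta> k}"
  shows "short_interval_family S' n \<alpha>' \<beta>' d"
  unfolding short_interval_family_def
proof (intro conjI allI impI)
  show "\<alpha>' k \<le> \<beta>' k" "\<alpha>' k \<in> S'" "\<beta>' k \<in> S'" if "k < n" for k
    using mem[OF that] by auto
  show "{\<alpha>' j<..<\<beta>' j} \<inter> {\<alpha>' k<..<\<beta>' k} = {}" if "j < n" "k < n" "j \<noteq> k" for j k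
    using fam sub that unfolding short_interval_family_def by blast
  have "\<beta>' k - \<alpha>' k \<le> \<beta> k - \<alpha> k" if "k < n" for k
    using sub[OF that] mem[OF that] fam that unfolding short_interval_family_def
    by (cases "\<alpha>' k < \<beta>' k") (auto simp: greaterThanLessThan_subseteq_greaterThanLessThan)
  then have "(\<Sum>k<n. \<beta>' k - \<alpha>' k) \<le> (\<Sum>k<n. \<beta> k - \<alpha> k)"
    by (intro sum_mono) auto
  then show "(\<Sum>k<n. \<beta>' k - \<alpha>' k) < d"
    using fam unfolding short_interval_family_def by linarith
qed

lemma short_interval_family_split:
  assumes fam: "short_interval_family {a..b} n \<alpha> \<beta> d" and "a \<le> s" "s \<le> b"
  shows "short_interval_family {a..s} n (\<lambda>k. min (\<alpha> k) s) (\<lambda>k. min (\<beta> k) s) d"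
    and "short_interval_family {s..b} n (\<lambda>k. max (\<alpha> k) s) (\<lambda>k. max (\<beta> k) s) d"
proof -
  have ab: "\<alpha> k \<le> \<beta> k" "\<alpha> k \<in> {a..b}" "\<beta> k \<in> {a..b}" if "k < n" for k
    using fam that unfolding short_interval_family_def by auto
  show "short_interval_family {a..s} n (\<lambda>k. min (\<alpha> k) s) (\<lambda>k. min (\<beta> k) s) d"
  proof (rule short_interval_family_shrink[OF fam])
    fix k assume "k < n"
    then show "min (\<alpha> k) s \<le> min (\<beta> k) s \<and> min (\<alpha> k) s \<in> {a..s} \<and> min (\<beta> k) s \<in> {a..s}"
      using ab[of k] \<open>a \<le> s\<close> by (auto simp: min_def)
  qed auto
  show "short_interval_family {s..b} n (\<lambda>k. max (\<alpha> k) s) (\<lambda>k. max (\<beta> k) s) d"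
  proof (rule short_interval_family_shrink[OF fam])
    fix k assume "k < n"
    then show "max (\<alpha> k) s \<le> max (\<beta> k) s \<and> max (\<alpha> k) s \<in> {s..b} \<and> max (\<beta> k) s \<in> {s..b}"
      using ab[of k] \<open>s \<le> b\<close> by (auto simp: max_def)
  qed auto
qed

lemma short_interval_family_translate:
  assumes fam: "short_interval_family {a..b} n \<alpha> \<beta> d"
  shows "short_interval_family {a+c..b+c} n (\<lambda>k. \<alpha> k + c) (\<lambda>k. \<beta> k + c) d"
  unfolding short_interval_family_def
proof (intro conjI allI impI)
  fix j k assume "j < n" "k < n" "j \<noteq> k"
  then have "{\<alpha> j<..<\<beta> j} \<inter> {\<alpha> k<..<\<beta> k} = {}"
    using fam unfolding short_interval_family_def by blast
  then show "{\<alpha> j + c<..<\<beta> j + c} \<inter> {\<alpha> k + c<..<\<beta> k + c} = {}"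
    by (auto simp: min_def max_def)
qed (use fam in \<open>auto simp: short_interval_family_def\<close>)

lemma short_interval_family_reflect:
  assumes fam: "short_interval_family {-b..-a} n \<alpha> \<beta> d"
  shows "short_interval_family {a..b} n (\<lambda>k. - \<beta> k) (\<lambda>k. - \<alpha> k) d"
  unfolding short_interval_family_def
proof (intro conjI allI impI)
  fix j k assume "j < n" "k < n" "j \<noteq> k"
  then have "{\<alpha> j<..<\<beta> j} \<inter> {\<alpha> k<..<\<beta> k} = {}"
    using fam unfolding short_interval_family_def by blast
  then show "{- \<beta> j<..<- \<alpha> j} \<inter> {- \<beta> k<..<- \<alpha> k} = {}"
    by (auto simp: min_def max_def split: if_splits)
qed (use fam in \<open>auto simp: short_interval_family_def\<close>)

lemma abs_cont_on_cong:
  assumes "abs_cont_on S f" "\<And>t. t \<in> S \<Longrightarrow> f t = g t"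
  shows "abs_cont_on S g"
proof -
  have "(\<Sum>k<n. norm (g (b k) - g (a k))) = (\<Sum>k<n. norm (f (b k) - f (a k)))"
    if "short_interval_family S n a b d" for n a b d
    using that assms(2) unfolding short_interval_family_def by (intro sum.cong) auto
  then show ?thesis
    using assms(1) unfolding abs_cont_on_iff_short_interval_family by metis
qed

lemma abs_cont_on_subset: "abs_cont_on S f \<Longrightarrow> T \<subseteq> S \<Longrightarrow> abs_cont_on T f"
  unfolding abs_cont_on_def by (meson subsetD)

lemma abs_cont_on_add:
  assumes f: "abs_cont_on S f" and g: "abs_cont_on S g"
  shows "abs_cont_on S (\<lambda>t. f t + g t)"
  unfolding abs_cont_on_iff_short_interval_family
proof (intro allI impI)
  fix e :: real assume "e > 0"
  then have "e/2 > 0" by simp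
  obtain d1 where "d1 > 0"
    and d1: "\<And>n a b. short_interval_family S n a b d1 \<Longrightarrow> (\<Sum>k<n. norm (f (b k) - f (a k))) < e/2"
    using f \<open>e/2 > 0\<close> unfolding abs_cont_on_iff_short_interval_family by blast
  obtain d2 where "d2 > 0"
    and d2: "\<And>n a b. short_interval_family S n a b d2 \<Longrightarrow> (\<Sum>k<n. norm (g (b k) - g (a k))) < e/2"
    using g \<open>e/2 > 0\<close> unfolding abs_cont_on_iff_short_interval_family by blast
  have "(\<Sum>k<n. norm (f (b k) + g (b k) - (f (a k) + g (a k)))) < e"
    if fam: "short_interval_family S n a b (min d1 d2)" for n a b
  proof -
    have "(\<Sum>k<n. norm (f (b k) + g (b k) - (f (a k) + g (a k))))
        \<le> (\<Sum>k<n. norm (f (b k) - f (a k))) + (\<Sum>k<n. norm (g (b k) - g (a k)))"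
      unfolding sum.distrib[symmetric] by (intro sum_mono) (metis add_diff_add norm_triangle_ineq)
    also have "\<dots> < e/2 + e/2"
      using fam by (intro add_strict_mono d1 d2; rule short_interval_family_mono) auto
    finally show ?thesis by simp
  qed
  then show "\<exists>d>0. \<forall>n a b. short_interval_family S n a b d \<longrightarrow>
      (\<Sum>k<n. norm (f (b k) + g (b k) - (f (a k) + g (a k)))) < e"
    using \<open>d1 > 0\<close> \<open>d2 > 0\<close> by (metis min_less_iff_conj)
qed

lemma abs_cont_on_affine: "abs_cont_on S (\<lambda>t. t *\<^sub>R c + d)"
  unfolding abs_cont_on_iff_short_interval_family
proof (intro allI impI)
  fix e :: real assume e: "e > 0"
  have p: "norm c + 1 > 0"
    by (smt (verit) norm_ge_zero)
  have "(\<Sum>k<n. norm ((b k *\<^sub>R c + d) - (a k *\<^sub>R c + d))) < e"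
    if fam: "short_interval_family S n a b (e / (norm c + 1))" for n a b
  proof -
    have len: "0 \<le> (\<Sum>k<n. b k - a k)" "(\<Sum>k<n. b k - a k) < e / (norm c + 1)"
      using fam unfolding short_interval_family_def by (auto intro: sum_nonneg)
    have "(\<Sum>k<n. norm ((b k *\<^sub>R c + d) - (a k *\<^sub>R c + d))) = (\<Sum>k<n. b k - a k) * norm c"
      using fam unfolding short_interval_family_def sum_distrib_right
      by (intro sum.cong) (auto simp: scaleR_diff_left[symmetric])
    also have "\<dots> \<le> (\<Sum>k<n. b k - a k) * (norm c + 1)"
      using len by (intro mult_left_mono) auto
    also have "\<dots> < e"
      using len(2) pos_less_divide_eq[OF p] by blast
    finally show ?thesis .
  qed
  then show "\<exists>\<delta>>0. \<forall>n a b. short_interval_family S n a b \<delta> \<longrightarrow>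
      (\<Sum>k<n. norm ((b k *\<^sub>R c + d) - (a k *\<^sub>R c + d))) < e"
    using e p by (intro exI[of _ "e / (norm c + 1)"]) simp
qed

lemma abs_cont_on_Icc_join:
  assumes "a \<le> s" "s \<le> b" and f1: "abs_cont_on {a..s} f" and f2: "abs_cont_on {s..b} f"
  shows "abs_cont_on {a..b} f"
  unfolding abs_cont_on_iff_short_interval_family
proof (intro allI impI)
  fix e :: real assume "e > 0"
  then have "e/2 > 0" by simp
  obtain d1 where "d1 > 0" and d1: "\<And>n a' b'. short_interval_family {a..s} n a' b' d1 \<Longrightarrow>
      (\<Sum>k<n. norm (f (b' k) - f (a' k))) < e/2"
    using f1 \<open>e/2 > 0\<close> unfolding abs_cont_on_iff_short_interval_family by blast
  obtain d2 where "d2 > 0" and d2: "\<And>n a' b'. short_interval_family {s..b} n a' b' d2 \<Longrightarrow>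
      (\<Sum>k<n. norm (f (b' k) - f (a' k))) < e/2"
    using f2 \<open>e/2 > 0\<close> unfolding abs_cont_on_iff_short_interval_family by blast
  have "(\<Sum>k<n. norm (f (\<beta> k) - f (\<alpha> k))) < e"
    if fam: "short_interval_family {a..b} n \<alpha> \<beta> (min d1 d2)" for n \<alpha> \<beta>
  proof -
    define \<alpha>L \<beta>L \<alpha>R \<beta>R where "\<alpha>L k = min (\<alpha> k) s" and "\<beta>L k = min (\<beta> k) s"
      and "\<alpha>R k = max (\<alpha> k) s" and "\<beta>R k = max (\<beta> k) s" for k
    have fam1: "short_interval_family {a..b} n \<alpha> \<beta> d1" and fam2: "short_interval_family {a..b} n \<alpha> \<beta> d2"
      by (rule short_interval_family_mono[OF fam]; simp)+
    have L: "short_interval_family {a..s} n \<alpha>L \<beta>L d1"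
      unfolding \<alpha>L_def \<beta>L_def by (rule short_interval_family_split(1)[OF fam1 assms(1,2)])
    have R: "short_interval_family {s..b} n \<alpha>R \<beta>R d2"
      unfolding \<alpha>R_def \<beta>R_def by (rule short_interval_family_split(2)[OF fam2 assms(1,2)])
    have ab: "\<alpha> k \<le> \<beta> k" if "k < n" for k
      using fam that unfolding short_interval_family_def by auto
    \<comment> \<open>cut each interval at \<open>s\<close>; the triangle inequality covers the one interval containing \<open>s\<close>\<close>
    have "norm (f (\<beta> k) - f (\<alpha> k)) \<le> norm (f (\<beta>L k) - f (\<alpha>L k)) + norm (f (\<beta>R k) - f (\<alpha>R k))"
      if "k < n" for k
      using ab[OF that] norm_triangle_ineq[of "f s - f (\<alpha> k)" "f (\<beta> k) - f s"]
      by (cases "\<beta> k \<le> s"; cases "s \<le> \<alpha> k") (auto simp: \<alpha>L_def \<beta>L_def \<alpha>R_def \<beta>R_def)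
    then have "(\<Sum>k<n. norm (f (\<beta> k) - f (\<alpha> k)))
        \<le> (\<Sum>k<n. norm (f (\<beta>L k) - f (\<alpha>L k))) + (\<Sum>k<n. norm (f (\<beta>R k) - f (\<alpha>R k)))"
      unfolding sum.distrib[symmetric] by (intro sum_mono) auto
    then show ?thesis using d1[OF L] d2[OF R] by linarith
  qed
  then show "\<exists>d>0. \<forall>n a' b'. short_interval_family {a..b} n a' b' d \<longrightarrow>
      (\<Sum>k<n. norm (f (b' k) - f (a' k))) < e"
    using \<open>d1 > 0\<close> \<open>d2 > 0\<close> by (metis min_less_iff_conj)
qed

lemma abs_cont_on_translate:
  assumes "abs_cont_on {a+c..b+c} f"
  shows "abs_cont_on {a..b} (\<lambda>t. f (t + c))"
  unfolding abs_cont_on_iff_short_interval_family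
proof (intro allI impI)
  fix e :: real assume "e > 0"
  then obtain d where "d > 0" and d: "\<And>n a' b'. short_interval_family {a+c..b+c} n a' b' d \<Longrightarrow>
      (\<Sum>k<n. norm (f (b' k) - f (a' k))) < e"
    using assms unfolding abs_cont_on_iff_short_interval_family by blast
  then show "\<exists>d>0. \<forall>n a' b'. short_interval_family {a..b} n a' b' d \<longrightarrow>
      (\<Sum>k<n. norm (f (b' k + c) - f (a' k + c))) < e"
    using short_interval_family_translate by blast
qed

lemma abs_cont_on_reflect:
  assumes "abs_cont_on {a..b} f"
  shows "abs_cont_on {-b..-a} (\<lambda>t. f (- t))"
  unfolding abs_cont_on_iff_short_interval_family
proof (intro allI impI)
  fix e :: real assume "e > 0"
  then obtain d where "d > 0" and d: "\<And>n a' b'. short_interval_family {a..b} n a' b' d \<Longrightarrow>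
      (\<Sum>k<n. norm (f (b' k) - f (a' k))) < e"
    using assms unfolding abs_cont_on_iff_short_interval_family by blast
  have "(\<Sum>k<n. norm (f (- \<beta> k) - f (- \<alpha> k))) < e"
    if "short_interval_family {-b..-a} n \<alpha> \<beta> d" for n \<alpha> \<beta>
    using d[OF short_interval_family_reflect[OF that]] by (simp add: norm_minus_commute)
  then show "\<exists>d>0. \<forall>n a' b'. short_interval_family {-b..-a} n a' b' d \<longrightarrow>
      (\<Sum>k<n. norm (f (- b' k) - f (- a' k))) < e"
    using \<open>d > 0\<close> by blast
qed

lemma abs_cont_on_imp_continuous_on:
  assumes "abs_cont_on {a..b} f"
  shows "continuous_on {a..b} f"
  unfolding continuous_on_iff
proof (intro ballI allI impI)
  fix x e assume x: "x \<in> {a..b}" and "(e::real) > 0"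
  then obtain d where "d > 0" and d: "\<And>n a' b'. short_interval_family {a..b} n a' b' d \<Longrightarrow>
      (\<Sum>k<n. norm (f (b' k) - f (a' k))) < e"
    using assms unfolding abs_cont_on_iff_short_interval_family by blast
  have "dist (f y) (f x) < e" if y: "y \<in> {a..b}" "dist y x < d" for y
  proof -
    have "short_interval_family {a..b} 1 (\<lambda>_. min x y) (\<lambda>_. max x y) d"
      using x y unfolding short_interval_family_def dist_real_def by auto
    from d[OF this] show ?thesis
      by (cases "x \<le> y") (auto simp: dist_norm norm_minus_commute max_def min_def)
  qed
  then show "\<exists>d>0. \<forall>y\<in>{a..b}. dist y x < d \<longrightarrow> dist (f y) (f x) < e"
    using \<open>d > 0\<close> by blast
qed

section \<open>Solutions on compact intervals\<close>

definition is_sol_Icc :: "('a::euclidean_space \<Rightarrow> 'a set) \<Rightarrow> real \<Rightarrow> real \<Rightarrow> (real \<Rightarrow> 'a) \<Rightarrow> bool" where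
  "is_sol_Icc G a b f \<longleftrightarrow> a \<le> b \<and> abs_cont_on {a..b} f \<and>
     (\<exists>N. negligible N \<and> (\<forall>t\<in>{a<..<b} - N. \<exists>v. (f has_vector_derivative v) (at t) \<and> v \<in> G (f t)))"

lemma is_sol_IccI:
  assumes "a \<le> b" "abs_cont_on {a..b} f" "negligible N"
    "\<And>t. t \<in> {a<..<b} - N \<Longrightarrow> \<exists>v. (f has_vector_derivative v) (at t) \<and> v \<in> G (f t)"
  shows "is_sol_Icc G a b f"
  using assms unfolding is_sol_Icc_def by blast

lemma is_sol_IccD:
  assumes "is_sol_Icc G a b f"
  shows "a \<le> b" "abs_cont_on {a..b} f"
  using assms unfolding is_sol_Icc_def by auto

lemma is_sol_IccE:
  assumes "is_sol_Icc G a b f"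
  obtains N where "negligible N"
    "\<And>t. t \<in> {a<..<b} - N \<Longrightarrow> \<exists>v. (f has_vector_derivative v) (at t) \<and> v \<in> G (f t)"
  using assms unfolding is_sol_Icc_def by blast

lemma is_sol_Icc_cong:
  assumes sol: "is_sol_Icc G a b f" and eq: "\<And>t. t \<in> {a..b} \<Longrightarrow> f t = g t"
  shows "is_sol_Icc G a b g"
proof -
  obtain N where "negligible N"
    and N: "\<And>t. t \<in> {a<..<b} - N \<Longrightarrow> \<exists>v. (f has_vector_derivative v) (at t) \<and> v \<in> G (f t)"
    using is_sol_IccE[OF sol] by blast
  have "\<exists>v. (g has_vector_derivative v) (at t) \<and> v \<in> G (g t)" if t: "t \<in> {a<..<b} - N" for t
  proof -
    obtain v where v: "(f has_vector_derivative v) (at t)" "v \<in> G (f t)"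
      using N[OF t] by blast
    have "(g has_vector_derivative v) (at t)"
      by (rule has_vector_derivative_transform_within_open[OF v(1), of "{a<..<b}"]) (use t eq in auto)
    then show ?thesis using v(2) eq[of t] t by auto
  qed
  then show ?thesis
    using is_sol_IccD[OF sol] abs_cont_on_cong[of "{a..b}" f g] eq \<open>negligible N\<close>
    by (intro is_sol_IccI) auto
qed

lemma is_sol_Icc_subinterval:
  assumes sol: "is_sol_Icc G a b f" and "a \<le> c" "c \<le> d" "d \<le> b"
  shows "is_sol_Icc G c d f"
proof -
  obtain N where "negligible N"
    and N: "\<And>t. t \<in> {a<..<b} - N \<Longrightarrow> \<exists>v. (f has_vector_derivative v) (at t) \<and> v \<in> G (f t)"
    using is_sol_IccE[OF sol] by blast
  have "abs_cont_on {c..d} f"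
    using assms by (intro abs_cont_on_subset[OF is_sol_IccD(2)[OF sol]]) auto
  then show ?thesis
    using assms \<open>negligible N\<close> N by (intro is_sol_IccI) auto
qed

lemma is_sol_Icc_join:
  assumes sol1: "is_sol_Icc G a s f" and sol2: "is_sol_Icc G s b f"
  shows "is_sol_Icc G a b f"
proof -
  obtain N1 where "negligible N1"
    and N1: "\<And>t. t \<in> {a<..<s} - N1 \<Longrightarrow> \<exists>v. (f has_vector_derivative v) (at t) \<and> v \<in> G (f t)"
    using is_sol_IccE[OF sol1] by blast
  obtain N2 where "negligible N2"
    and N2: "\<And>t. t \<in> {s<..<b} - N2 \<Longrightarrow> \<exists>v. (f has_vector_derivative v) (at t) \<and> v \<in> G (f t)"
    using is_sol_IccE[OF sol2] by blast
  have "a \<le> s" "s \<le> b"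
    using sol1 sol2 by (auto dest: is_sol_IccD)
  have "\<exists>v. (f has_vector_derivative v) (at t) \<and> v \<in> G (f t)"
    if "t \<in> {a<..<b} - insert s (N1 \<union> N2)" for t
  proof (cases "t < s")
    case True
    then show ?thesis using that N1 by auto
  next
    case False
    then show ?thesis using that N2 by auto
  qed
  moreover have "negligible (insert s (N1 \<union> N2))"
    using \<open>negligible N1\<close> \<open>negligible N2\<close> by simp
  moreover have "abs_cont_on {a..b} f"
    using \<open>a \<le> s\<close> \<open>s \<le> b\<close> is_sol_IccD(2)[OF sol1] is_sol_IccD(2)[OF sol2]
    by (rule abs_cont_on_Icc_join)
  ultimately show ?thesis
    using \<open>a \<le> s\<close> \<open>s \<le> b\<close> by (intro is_sol_IccI[where N = "insert s (N1 \<union> N2)"]) auto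
qed

lemma is_sol_Icc_translate:
  assumes sol: "is_sol_Icc G a b f"
  shows "is_sol_Icc G (a + c) (b + c) (\<lambda>t. f (t - c))"
proof -
  obtain N where "negligible N"
    and N: "\<And>t. t \<in> {a<..<b} - N \<Longrightarrow> \<exists>v. (f has_vector_derivative v) (at t) \<and> v \<in> G (f t)"
    using is_sol_IccE[OF sol] by blast
  have "\<exists>v. ((\<lambda>t. f (t - c)) has_vector_derivative v) (at t) \<and> v \<in> G (f (t - c))"
    if t: "t \<in> {a+c<..<b+c} - (+) c ` N" for t
  proof -
    have "t - c \<in> {a<..<b} - N"
      using t by (force simp: image_iff)
    then obtain v where v: "(f has_vector_derivative v) (at (t - c))" "v \<in> G (f (t - c))"
      using N by blast
    have "((\<lambda>t. t - c) has_vector_derivative 1) (at t)"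
      by (auto intro!: derivative_eq_intros)
    from vector_diff_chain_at[OF this v(1)] show ?thesis
      using v(2) by (auto simp: o_def)
  qed
  moreover have "abs_cont_on {a+c..b+c} (\<lambda>t. f (t - c))"
    using abs_cont_on_translate[of "a+c" "-c" "b+c" f] is_sol_IccD(2)[OF sol] by simp
  moreover have "negligible ((+) c ` N)"
    using \<open>negligible N\<close> by (rule negligible_translation)
  ultimately show ?thesis
    using is_sol_IccD(1)[OF sol] by (intro is_sol_IccI) auto
qed

lemma is_sol_Icc_reflect:
  assumes sol: "is_sol_Icc (infl_neg F e) a b f"
  shows "is_sol_Icc (infl F e) (-b) (-a) (\<lambda>t. f (- t))"
proof -
  obtain N where "negligible N"
    and N: "\<And>t. t \<in> {a<..<b} - N \<Longrightarrow> \<exists>v. (f has_vector_derivative v) (at t) \<and> v \<in> infl_neg F e (f t)"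
    using is_sol_IccE[OF sol] by blast
  have "\<exists>v. ((\<lambda>t. f (- t)) has_vector_derivative v) (at t) \<and> v \<in> infl F e (f (- t))"
    if t: "t \<in> {-b<..<-a} - uminus ` N" for t
  proof -
    have "- t \<in> {a<..<b} - N"
      using t by (force simp: image_iff)
    then obtain v where v: "(f has_vector_derivative v) (at (- t))" "v \<in> infl_neg F e (f (- t))"
      using N by blast
    have "(uminus has_vector_derivative -1) (at t)"
      by (auto intro!: derivative_eq_intros)
    from vector_diff_chain_at[OF this v(1)]
    have "((\<lambda>t. f (- t)) has_vector_derivative - v) (at t)"
      by (simp add: o_def)
    moreover have "- v \<in> infl F e (f (- t))"
    proof -
      obtain p w where "v = - p + w" "p \<in> F (f (- t))" "norm w \<le> e (f (- t))"
        using v(2) unfolding infl_neg_def by blast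
      then have "- v = p + - w" "p \<in> F (f (- t))" "norm (- w) \<le> e (f (- t))"
        by simp_all
      then show ?thesis unfolding infl_def by blast
    qed
    ultimately show ?thesis by blast
  qed
  moreover have "negligible (uminus ` N)"
    using negligible_differentiable_image_negligible[OF order_refl \<open>negligible N\<close>]
    by (simp add: differentiable_on_minus)
  ultimately show ?thesis
    using is_sol_IccD[OF sol] abs_cont_on_reflect by (intro is_sol_IccI) auto
qed

lemma is_sol_imp_is_sol_Icc:
  assumes sol: "is_sol G J f" and ab: "a \<in> J" "b \<in> J" "a \<le> b"
  shows "is_sol_Icc G a b f"
proof -
  obtain N where "N \<in> null_sets lebesgue"
    and N: "\<And>t. t \<in> J - N \<Longrightarrow> \<exists>v. (f has_vector_derivative v) (at t within J) \<and> v \<in> G (f t)"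
    using sol unfolding is_sol_def by blast
  have "is_interval J"
    using sol unfolding is_sol_def by blast
  then have sub: "{a..b} \<subseteq> J"
    using ab unfolding is_interval_1 by (meson atLeastAtMost_iff subsetI)
  then have int: "{a<..<b} \<subseteq> interior J"
    by (intro interior_maximal) auto
  have "\<exists>v. (f has_vector_derivative v) (at t) \<and> v \<in> G (f t)" if t: "t \<in> {a<..<b} - N" for t
  proof -
    have "at t within J = at t"
      using t int by (intro at_within_interior) auto
    moreover have "t \<in> J - N"
      using t sub by auto
    ultimately show ?thesis
      using N[of t] by auto
  qed
  moreover have "abs_cont_on {a..b} f"
    using sol sub unfolding is_sol_def loc_abs_cont_on_def by blast
  moreover have "negligible N"
    using \<open>N \<in> null_sets lebesgue\<close> negligible_iff_null_sets by blast
  ultimately show ?thesis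
    using \<open>a \<le> b\<close> by (intro is_sol_IccI[where N = N])
qed

lemma loc_abs_cont_onI:
  assumes "x \<in> J" and ac: "\<And>a b. a \<in> J \<Longrightarrow> b \<in> J \<Longrightarrow> a \<le> b \<Longrightarrow> abs_cont_on {a..b} f"
  shows "loc_abs_cont_on J f"
  unfolding loc_abs_cont_on_def
proof (intro allI impI)
  fix a b assume ab: "{a..b} \<subseteq> J"
  show "abs_cont_on {a..b} f"
  proof (cases "a \<le> b")
    case True
    then have "a \<in> J" "b \<in> J"
      using ab by auto
    then show ?thesis
      using ac True by blast
  next
    case False
    then show ?thesis
      using abs_cont_on_subset[OF ac[OF \<open>x \<in> J\<close> \<open>x \<in> J\<close> order_refl]] by simp
  qed
qed

text \<open>The exceptional null set of a solution on \<open>J\<close> is assembled from those on the countably many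
  subintervals with rational endpoints, together with the (negligible) frontier of \<open>J\<close>.\<close>
lemma is_sol_if_is_sol_Icc:
  assumes J: "is_interval J" "0 \<in> J"
    and sol: "\<And>a b. a \<in> J \<Longrightarrow> b \<in> J \<Longrightarrow> a \<le> b \<Longrightarrow> is_sol_Icc G a b f"
  shows "is_sol G J f"
proof -
  have "loc_abs_cont_on J f"
    by (rule loc_abs_cont_onI[OF J(2) is_sol_IccD(2)[OF sol]])
  define Q where "Q = {(a, b). a \<in> \<rat> \<and> b \<in> \<rat> \<and> a \<in> J \<and> b \<in> J \<and> a \<le> b}"
  have "\<forall>p\<in>Q. \<exists>N. negligible N \<and>
      (\<forall>t\<in>{fst p<..<snd p} - N. \<exists>v. (f has_vector_derivative v) (at t) \<and> v \<in> G (f t))"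
  proof
    fix p assume "p \<in> Q"
    then obtain a b where "p = (a, b)" "a \<in> J" "b \<in> J" "a \<le> b"
      unfolding Q_def by blast
    then show "\<exists>N. negligible N \<and>
        (\<forall>t\<in>{fst p<..<snd p} - N. \<exists>v. (f has_vector_derivative v) (at t) \<and> v \<in> G (f t))"
      using sol[of a b] unfolding is_sol_Icc_def by auto
  qed
  from bchoice[OF this] obtain NQ where NQ: "\<forall>p\<in>Q. negligible (NQ p) \<and>
      (\<forall>t\<in>{fst p<..<snd p} - NQ p. \<exists>v. (f has_vector_derivative v) (at t) \<and> v \<in> G (f t))"
    by blast
  define N where "N = frontier J \<union> \<Union>(NQ ` Q)"
  have "countable Q"
    by (rule countable_subset[of _ "\<rat> \<times> \<rat>"]) (auto simp: Q_def countable_rat)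
  then have "negligible N"
    unfolding N_def using J(1) NQ
    by (auto intro!: negligible_countable_Union negligible_convex_frontier is_interval_convex)
  moreover have "\<exists>v. (f has_vector_derivative v) (at t within J) \<and> v \<in> G (f t)"
    if t: "t \<in> J - N" for t
  proof -
    have "t \<in> interior J"
      using t closure_subset unfolding N_def frontier_def by blast
    then obtain e where "e > 0" "ball t e \<subseteq> J"
      using mem_interior by blast
    obtain a b where "a \<in> \<rat>" "t - e < a" "a < t" "b \<in> \<rat>" "t < b" "b < t + e"
      using Rats_dense_in_real[of "t - e" t] Rats_dense_in_real[of t "t + e"] \<open>e > 0\<close> by auto
    then have "(a, b) \<in> Q"
      using \<open>ball t e \<subseteq> J\<close> unfolding Q_def by (auto simp: subset_iff dist_real_def)
    moreover have "t \<notin> NQ (a, b)"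
      using t \<open>(a, b) \<in> Q\<close> unfolding N_def by blast
    ultimately obtain v where "(f has_vector_derivative v) (at t)" "v \<in> G (f t)"
      using NQ \<open>a < t\<close> \<open>t < b\<close> by fastforce
    then show ?thesis
      using has_vector_derivative_at_within by blast
  qed
  ultimately show ?thesis
    unfolding is_sol_def negligible_iff_null_sets using J \<open>loc_abs_cont_on J f\<close>
    by (intro conjI exI[of _ N]) auto
qed

lemma is_sol_Icc_imp_is_sol:
  assumes "is_sol_Icc G 0 T f"
  shows "is_sol G {0..T} f"
proof (rule is_sol_if_is_sol_Icc)
  show "is_sol_Icc G a b f" if "a \<in> {0..T}" "b \<in> {0..T}" "a \<le> b" for a b
    using is_sol_Icc_subinterval[OF assms] that by auto
qed (use is_sol_IccD(1)[OF assms] in auto)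

section \<open>Maximal solutions\<close>

definition graph :: "real set \<Rightarrow> (real \<Rightarrow> 'a) \<Rightarrow> (real \<times> 'a) set" where
  "graph J \<psi> = (\<lambda>t. (t, \<psi> t)) ` J"

lemma graph_subset_iff: "graph J \<psi> \<subseteq> graph J' \<psi>' \<longleftrightarrow> J \<subseteq> J' \<and> (\<forall>t\<in>J. \<psi>' t = \<psi> t)"
  unfolding graph_def by auto

lemma fst_image_graph: "fst ` graph J \<psi> = J"
  unfolding graph_def by (simp add: image_image)

lemma Union_chain_of_graphs:
  assumes graphs: "\<And>X. X \<in> C \<Longrightarrow> \<exists>J \<psi>. X = graph J \<psi>"
    and chain: "\<And>X Y. X \<in> C \<Longrightarrow> Y \<in> C \<Longrightarrow> X \<subseteq> Y \<or> Y \<subseteq> X"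
  shows "\<exists>J \<psi>. \<Union>C = graph J \<psi>"
proof -
  have unique: "y = y'" if mem: "(t, y) \<in> \<Union>C" "(t, y') \<in> \<Union>C" for t y y'
  proof -
    obtain X Y where "X \<in> C" "Y \<in> C" "(t, y) \<in> X" "(t, y') \<in> Y"
      using mem by blast
    then obtain Z where "Z \<in> C" "(t, y) \<in> Z" "(t, y') \<in> Z"
      using chain by blast
    moreover obtain J \<psi> where "Z = graph J \<psi>"
      using graphs \<open>Z \<in> C\<close> by blast
    ultimately show ?thesis
      unfolding graph_def by blast
  qed
  define \<psi> where "\<psi> t = (SOME y. (t, y) \<in> \<Union>C)" for t
  have \<psi>: "\<psi> t = y" if "(t, y) \<in> \<Union>C" for t y
    using unique[OF someI[of "\<lambda>y. (t, y) \<in> \<Union>C", OF that] that] unfolding \<psi>_def .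
  have "\<Union>C = graph (fst ` \<Union>C) \<psi>"
  proof (intro set_eqI iffI)
    fix p assume "p \<in> \<Union>C"
    then show "p \<in> graph (fst ` \<Union>C) \<psi>"
      using \<psi>[of "fst p" "snd p"] unfolding graph_def by force
  next
    fix p assume "p \<in> graph (fst ` \<Union>C) \<psi>"
    then obtain t y where "p = (t, \<psi> t)" "(t, y) \<in> \<Union>C"
      unfolding graph_def by force
    then show "p \<in> \<Union>C"
      using \<psi> by auto
  qed
  then show ?thesis by blast
qed

lemma is_sol_Union_chain:
  assumes "C \<noteq> {}"
    and sols: "\<And>X. X \<in> C \<Longrightarrow> \<exists>J \<psi>. X = graph J \<psi> \<and> is_sol G J \<psi>"
    and chain: "\<And>X Y. X \<in> C \<Longrightarrow> Y \<in> C \<Longrightarrow> X \<subseteq> Y \<or> Y \<subseteq> X"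
    and union: "\<Union>C = graph J \<psi>"
  shows "is_sol G J \<psi>"
proof -
  have member: "J' \<subseteq> J \<and> (\<forall>t\<in>J'. \<psi> t = \<psi>' t)" if "graph J' \<psi>' \<in> C" for J' \<psi>'
    using that union graph_subset_iff[of J' \<psi>' J \<psi>] by blast
  have common: "\<exists>J' \<psi>'. graph J' \<psi>' \<in> C \<and> is_sol G J' \<psi>' \<and> a \<in> J' \<and> b \<in> J'"
    if ab: "a \<in> J" "b \<in> J" for a b
  proof -
    have "(a, \<psi> a) \<in> \<Union>C" "(b, \<psi> b) \<in> \<Union>C"
      using ab union unfolding graph_def by auto
    then obtain X Y where "X \<in> C" "Y \<in> C" "(a, \<psi> a) \<in> X" "(b, \<psi> b) \<in> Y"
      by blast
    then obtain Z where "Z \<in> C" "(a, \<psi> a) \<in> Z" "(b, \<psi> b) \<in> Z"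
      using chain by blast
    moreover obtain J' \<psi>' where "Z = graph J' \<psi>'" "is_sol G J' \<psi>'"
      using sols \<open>Z \<in> C\<close> by blast
    ultimately show ?thesis
      unfolding graph_def by blast
  qed
  have sol_Icc: "is_sol_Icc G a b \<psi>" if ab: "a \<in> J" "b \<in> J" "a \<le> b" for a b
  proof -
    obtain J' \<psi>' where J': "graph J' \<psi>' \<in> C" "is_sol G J' \<psi>'" "a \<in> J'" "b \<in> J'"
      using common ab by blast
    have "{a..b} \<subseteq> J'"
      using J'(2-4) unfolding is_sol_def is_interval_1 by (meson atLeastAtMost_iff subsetI)
    then show ?thesis
      using member[OF J'(1)]
      by (intro is_sol_Icc_cong[OF is_sol_imp_is_sol_Icc[OF J'(2-4) \<open>a \<le> b\<close>]]) auto
  qed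
  have "is_interval J"
    unfolding is_interval_1
  proof (intro ballI allI impI)
    fix a b x assume "a \<in> J" "b \<in> J" "a \<le> x \<and> x \<le> b"
    then obtain J' \<psi>' where "graph J' \<psi>' \<in> C" "is_sol G J' \<psi>'" "a \<in> J'" "b \<in> J'"
      using common by blast
    then show "x \<in> J"
      using member \<open>a \<le> x \<and> x \<le> b\<close> unfolding is_sol_def is_interval_1 by blast
  qed
  moreover have "0 \<in> J"
    using \<open>C \<noteq> {}\<close> sols member unfolding is_sol_def by blast
  ultimately show ?thesis
    using sol_Icc by (rule is_sol_if_is_sol_Icc)
qed

definition extension_graphs ::
    "('a::euclidean_space \<Rightarrow> 'a set) \<Rightarrow> real set \<Rightarrow> (real \<Rightarrow> 'a) \<Rightarrow> (real \<times> 'a) set set" where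
  "extension_graphs G I \<phi> = {graph J \<psi> | J \<psi>. is_sol G J \<psi> \<and> I \<subseteq> J \<and> (\<forall>t\<in>I. \<psi> t = \<phi> t)}"

lemma chain_extension_graphs_bounded:
  assumes "is_sol G I \<phi>" and C: "C \<in> chains (extension_graphs G I \<phi>)"
  shows "\<exists>U\<in>extension_graphs G I \<phi>. \<forall>X\<in>C. X \<subseteq> U"
proof (cases "C = {}")
  case True
  have "graph I \<phi> \<in> extension_graphs G I \<phi>"
    using assms(1) unfolding extension_graphs_def by blast
  then show ?thesis
    using True by blast
next
  case False
  have CA: "C \<subseteq> extension_graphs G I \<phi>"
    and chain: "\<And>X Y. X \<in> C \<Longrightarrow> Y \<in> C \<Longrightarrow> X \<subseteq> Y \<or> Y \<subseteq> X"
    using C unfolding chains_def chain_subset_def by blast+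
  have sols: "\<exists>J \<psi>. X = graph J \<psi> \<and> is_sol G J \<psi>" if "X \<in> C" for X
    using CA that unfolding extension_graphs_def by blast
  then obtain J \<psi> where U: "\<Union>C = graph J \<psi>"
    using Union_chain_of_graphs[of C] chain by blast
  obtain J0 \<psi>0 where J0: "graph J0 \<psi>0 \<in> C" "I \<subseteq> J0" "\<forall>t\<in>I. \<psi>0 t = \<phi> t"
    using False CA unfolding extension_graphs_def by blast
  then have "graph J0 \<psi>0 \<subseteq> graph J \<psi>"
    using U by blast
  then have "I \<subseteq> J" "\<forall>t\<in>I. \<psi> t = \<phi> t"
    using J0(2,3) unfolding graph_subset_iff by auto
  moreover have "is_sol G J \<psi>"
    using False sols chain U by (rule is_sol_Union_chain)
  ultimately have "graph J \<psi> \<in> extension_graphs G I \<phi>"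
    unfolding extension_graphs_def by blast
  then show ?thesis
    using U by blast
qed

lemma is_sol_extends_to_max_sol:
  assumes "is_sol G I \<phi>"
  shows "\<exists>J \<psi>. is_max_sol G J \<psi> \<and> I \<subseteq> J \<and> (\<forall>t\<in>I. \<psi> t = \<phi> t)"
proof -
  have "\<forall>C\<in>chains (extension_graphs G I \<phi>). \<exists>U\<in>extension_graphs G I \<phi>. \<forall>X\<in>C. X \<subseteq> U"
    using chain_extension_graphs_bounded[OF assms] by blast
  from Zorn_Lemma2[OF this] obtain M where "M \<in> extension_graphs G I \<phi>"
    and M: "\<forall>X\<in>extension_graphs G I \<phi>. M \<subseteq> X \<longrightarrow> X = M"
    by blast
  then obtain J \<psi> where J: "M = graph J \<psi>" "is_sol G J \<psi>" "I \<subseteq> J" "\<forall>t\<in>I. \<psi> t = \<phi> t"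
    unfolding extension_graphs_def by blast
  have "\<not> (\<exists>J' \<psi>'. is_sol G J' \<psi>' \<and> J \<subset> J' \<and> (\<forall>t\<in>J. \<psi>' t = \<psi> t))"
  proof
    assume "\<exists>J' \<psi>'. is_sol G J' \<psi>' \<and> J \<subset> J' \<and> (\<forall>t\<in>J. \<psi>' t = \<psi> t)"
    then obtain J' \<psi>' where J': "is_sol G J' \<psi>'" "J \<subset> J'" "\<forall>t\<in>J. \<psi>' t = \<psi> t"
      by blast
    moreover have "I \<subseteq> J'" "\<forall>t\<in>I. \<psi>' t = \<phi> t"
      using J(3,4) J'(2,3) by auto
    ultimately have "graph J' \<psi>' \<in> extension_graphs G I \<phi>"
      unfolding extension_graphs_def by blast
    moreover have "M \<subseteq> graph J' \<psi>'"
      unfolding J(1) graph_subset_iff using J'(2,3) by auto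
    ultimately have "graph J' \<psi>' = graph J \<psi>"
      using M J(1) by blast
    then have "J' = J"
      using fst_image_graph[of J' \<psi>'] fst_image_graph[of J \<psi>] by simp
    then show False
      using J'(2) by blast
  qed
  then show ?thesis
    using J unfolding is_max_sol_def by blast
qed

section \<open>The reachable set\<close>

lemma mem_Reach_iff:
  "y \<in> Reach G t x \<longleftrightarrow> (\<exists>s f. s \<le> t \<and> is_sol_Icc G 0 s f \<and> f 0 = x \<and> f s = y)"
proof
  assume "y \<in> Reach G t x"
  then obtain I \<phi> s where "(I, \<phi>) \<in> Sols G x" "s \<in> I" "0 \<le> s" "s \<le> t" "y = \<phi> s"
    unfolding Reach_def by auto
  then have "is_sol G I \<phi>" "\<phi> 0 = x" "s \<in> I" "0 \<in> I" "0 \<le> s" "s \<le> t" "y = \<phi> s"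
    unfolding Sols_def is_max_sol_def is_sol_def by auto
  then show "\<exists>s f. s \<le> t \<and> is_sol_Icc G 0 s f \<and> f 0 = x \<and> f s = y"
    using is_sol_imp_is_sol_Icc by blast
next
  assume "\<exists>s f. s \<le> t \<and> is_sol_Icc G 0 s f \<and> f 0 = x \<and> f s = y"
  then obtain s f where sf: "s \<le> t" "is_sol_Icc G 0 s f" "f 0 = x" "f s = y"
    by blast
  then have "0 \<le> s"
    by (auto dest: is_sol_IccD)
  obtain J \<psi> where "is_max_sol G J \<psi>" "{0..s} \<subseteq> J" "\<forall>t\<in>{0..s}. \<psi> t = f t"
    using is_sol_extends_to_max_sol[OF is_sol_Icc_imp_is_sol[OF sf(2)]] by blast
  then have "(J, \<psi>) \<in> Sols G x" "s \<in> J \<inter> {0..t}" "\<psi> s = y"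
    using sf \<open>0 \<le> s\<close> unfolding Sols_def by auto
  then show "y \<in> Reach G t x"
    unfolding Reach_def by blast
qed

lemma mem_Kset_iff:
  "y \<in> Kset F e Xo \<longleftrightarrow> (\<exists>s f. is_sol_Icc (infl F e) 0 s f \<and> f 0 \<in> Xo \<and> f s = y)"
proof -
  have "y \<in> Kset F e Xo \<longleftrightarrow> (\<exists>t\<ge>0. \<exists>x\<in>Xo. y \<in> Reach (infl F e) t x)"
    unfolding Kset_def by auto
  also have "\<dots> \<longleftrightarrow> (\<exists>s f. is_sol_Icc (infl F e) 0 s f \<and> f 0 \<in> Xo \<and> f s = y)"
    unfolding mem_Reach_iff by (blast dest: is_sol_IccD(1) intro: order_refl)
  finally show ?thesis .
qed

text \<open>Shift \<open>p\<close> so that it starts where a solution from \<open>Xo\<close> reaching \<open>z\<close> ends, and concatenate.\<close>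
lemma Kset_is_sol_Icc_endpoint:
  assumes "z \<in> Kset F e Xo" and p: "is_sol_Icc (infl F e) t0 t1 p" "p t0 = z"
  shows "p t1 \<in> Kset F e Xo"
proof -
  obtain s f where f: "is_sol_Icc (infl F e) 0 s f" "f 0 \<in> Xo" "f s = z"
    using assms(1) mem_Kset_iff by blast
  define q where "q t = (if t \<le> s then f t else p (t - (s - t0)))" for t
  have "is_sol_Icc (infl F e) s (t1 + (s - t0)) (\<lambda>t. p (t - (s - t0)))"
    using is_sol_Icc_translate[OF p(1), of "s - t0"] by simp
  then have "is_sol_Icc (infl F e) s (t1 + (s - t0)) q"
    by (rule is_sol_Icc_cong) (use f(3) p(2) in \<open>auto simp: q_def\<close>)
  moreover have "is_sol_Icc (infl F e) 0 s q"
    by (rule is_sol_Icc_cong[OF f(1)]) (simp add: q_def)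
  ultimately have "is_sol_Icc (infl F e) 0 (t1 + (s - t0)) q"
    by (rule is_sol_Icc_join[rotated])
  moreover have "q 0 \<in> Xo" "q (t1 + (s - t0)) = p t1"
    using f(2,3) p(2) is_sol_IccD(1)[OF f(1)] is_sol_IccD(1)[OF p(1)] by (auto simp: q_def)
  ultimately show ?thesis
    using mem_Kset_iff by metis
qed

section \<open>Semicontinuity and uniform closeness\<close>

lemma compact_uniform_from_local:
  fixes C :: "'a::metric_space set"
  assumes "compact C" and local: "\<And>x0. x0 \<in> C \<Longrightarrow> \<exists>r>0. \<forall>x\<in>ball x0 r. \<forall>y\<in>ball x0 r. P x y"
  shows "\<exists>e>0. \<forall>x\<in>C. \<forall>y. dist x y < e \<longrightarrow> P x y"
proof -
  obtain r where r: "\<And>x0. x0 \<in> C \<Longrightarrow> r x0 > 0 \<and> (\<forall>x\<in>ball x0 (r x0). \<forall>y\<in>ball x0 (r x0). P x y)"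
    using local by metis
  have "C \<subseteq> \<Union>((\<lambda>x0. ball x0 (r x0)) ` C)"
    using r by force
  then obtain e where "e > 0" and e: "\<And>x. x \<in> C \<Longrightarrow> \<exists>B\<in>(\<lambda>x0. ball x0 (r x0)) ` C. ball x e \<subseteq> B"
    using Heine_Borel_lemma[OF \<open>compact C\<close>] by blast
  have "P x y" if "x \<in> C" "dist x y < e" for x y
  proof -
    obtain x0 where "x0 \<in> C" "ball x e \<subseteq> ball x0 (r x0)"
      using e[OF \<open>x \<in> C\<close>] by blast
    moreover have "x \<in> ball x e" "y \<in> ball x e"
      using \<open>e > 0\<close> that by auto
    ultimately show ?thesis
      using r by blast
  qed
  then show ?thesis
    using \<open>e > 0\<close> by blast
qed

lemma lsc_at_meets_finite_set:
  assumes lsc: "lsc_at F x0" and "finite T" "T \<subseteq> F x0" "\<rho> > 0"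
  shows "\<exists>r>0. \<forall>y. dist y x0 < r \<longrightarrow> (\<forall>c\<in>T. F y \<inter> ball c \<rho> \<noteq> {})"
proof -
  have "\<forall>c\<in>T. eventually (\<lambda>y. F y \<inter> ball c \<rho> \<noteq> {}) (nhds x0)"
  proof
    fix c assume "c \<in> T"
    then have "c \<in> F x0 \<inter> ball c \<rho>"
      using \<open>T \<subseteq> F x0\<close> \<open>\<rho> > 0\<close> by (simp add: subsetD)
    then have "open (ball c \<rho>) \<and> F x0 \<inter> ball c \<rho> \<noteq> {}"
      by auto
    from lsc[unfolded lsc_at_def, rule_format, OF this]
    obtain r where "r > 0" and r: "\<forall>y\<in>ball x0 r. F y \<inter> ball c \<rho> \<noteq> {}"
      by blast
    show "eventually (\<lambda>y. F y \<inter> ball c \<rho> \<noteq> {}) (nhds x0)"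
      using eventually_nhds_ball[OF \<open>r > 0\<close>] by (rule eventually_mono) (rule bspec[OF r])
  qed
  then have "eventually (\<lambda>y. \<forall>c\<in>T. F y \<inter> ball c \<rho> \<noteq> {}) (nhds x0)"
    by (rule eventually_ball_finite[OF \<open>finite T\<close>])
  then show ?thesis
    by (simp add: eventually_nhds_metric)
qed

text \<open>Upper semicontinuity puts \<open>F x\<close> near \<open>F x0\<close>; lower semicontinuity, applied to a finite
  \<open>\<eta>/4\<close>-net of \<open>F x0\<close>, puts \<open>F x0\<close> near \<open>F y\<close>.\<close>
lemma usc_lsc_at_imp_locally_close:
  assumes usc: "usc_at F x0" and lsc: "lsc_at F x0" and "compact (F x0)" and "\<eta> > 0"
  shows "\<exists>r>0. \<forall>x\<in>ball x0 r. \<forall>y\<in>ball x0 r. \<forall>v\<in>F x. \<exists>u\<in>F y. dist v u < \<eta>"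
proof -
  have "open (\<Union>u\<in>F x0. ball u (\<eta>/2))" "F x0 \<subseteq> (\<Union>u\<in>F x0. ball u (\<eta>/2))"
    using \<open>\<eta> > 0\<close> by auto
  then obtain r1 where "r1 > 0" and r1: "\<forall>x\<in>ball x0 r1. F x \<subseteq> (\<Union>u\<in>F x0. ball u (\<eta>/2))"
    using usc unfolding usc_at_def by blast
  have "F x0 \<subseteq> (\<Union>c\<in>F x0. ball c (\<eta>/4))"
    using \<open>\<eta> > 0\<close> by auto
  then obtain T where T: "T \<subseteq> F x0" "finite T" "F x0 \<subseteq> (\<Union>c\<in>T. ball c (\<eta>/4))"
    using compactE_image[OF \<open>compact (F x0)\<close>, of "F x0" "\<lambda>c. ball c (\<eta>/4)"] by blast
  have "\<eta>/4 > 0"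
    using \<open>\<eta> > 0\<close> by simp
  then obtain r2 where "r2 > 0" and r2: "\<forall>y. dist y x0 < r2 \<longrightarrow> (\<forall>c\<in>T. F y \<inter> ball c (\<eta>/4) \<noteq> {})"
    using lsc_at_meets_finite_set[OF lsc T(2,1)] by blast
  have "\<exists>u\<in>F y. dist v u < \<eta>"
    if x: "x \<in> ball x0 (min r1 r2)" and y: "y \<in> ball x0 (min r1 r2)" and "v \<in> F x" for x y v
  proof -
    obtain u0 where "u0 \<in> F x0" "dist u0 v < \<eta>/2"
      using r1 x \<open>v \<in> F x\<close> by fastforce
    moreover obtain c where "c \<in> T" "dist c u0 < \<eta>/4"
      using T(3) \<open>u0 \<in> F x0\<close> by auto
    moreover have "dist y x0 < r2"
      using y by (simp add: dist_commute)
    then have "F y \<inter> ball c (\<eta>/4) \<noteq> {}"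
      using r2 \<open>c \<in> T\<close> by blast
    then obtain u where "u \<in> F y" "dist c u < \<eta>/4"
      by (auto simp del: dist_commute)
    ultimately have "dist v u < \<eta>"
      using dist_triangle[of v u u0] dist_triangle[of u0 u c] dist_commute[of u0 v]
        dist_commute[of c u0] by linarith
    then show ?thesis
      using \<open>u \<in> F y\<close> by blast
  qed
  then show ?thesis
    using \<open>r1 > 0\<close> \<open>r2 > 0\<close> by (intro exI[of _ "min r1 r2"]) auto
qed

section \<open>Affine corrections of solutions\<close>

lemma is_sol_Icc_infl_add_affine:
  assumes sol: "is_sol_Icc (infl F e) a b \<phi>"
    and close: "\<And>t v. t \<in> {a..b} \<Longrightarrow> v \<in> F (\<phi> t) \<Longrightarrow>
      \<exists>u\<in>F (\<phi> t + (t *\<^sub>R c + d)). norm (v - u) + e (\<phi> t) + norm c \<le> e' (\<phi> t + (t *\<^sub>R c + d))"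
  shows "is_sol_Icc (infl F e') a b (\<lambda>t. \<phi> t + (t *\<^sub>R c + d))"
proof -
  define \<psi> where "\<psi> t = \<phi> t + (t *\<^sub>R c + d)" for t
  obtain N where "negligible N"
    and N: "\<And>t. t \<in> {a<..<b} - N \<Longrightarrow> \<exists>v. (\<phi> has_vector_derivative v) (at t) \<and> v \<in> infl F e (\<phi> t)"
    using is_sol_IccE[OF sol] by blast
  have "\<exists>v. (\<psi> has_vector_derivative v) (at t) \<and> v \<in> infl F e' (\<psi> t)"
    if t: "t \<in> {a<..<b} - N" for t
  proof -
    obtain v where v: "(\<phi> has_vector_derivative v) (at t)" "v \<in> infl F e (\<phi> t)"
      using N[OF t] by blast
    then have "(\<psi> has_vector_derivative v + c) (at t)"
      unfolding \<psi>_def by (auto intro!: derivative_eq_intros)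
    moreover obtain v1 w where "v = v1 + w" "v1 \<in> F (\<phi> t)" "norm w \<le> e (\<phi> t)"
      using v(2) unfolding infl_def by blast
    moreover have "t \<in> {a..b}"
      using t by auto
    then obtain u where "u \<in> F (\<psi> t)" "norm (v1 - u) + e (\<phi> t) + norm c \<le> e' (\<psi> t)"
      using close[OF _ \<open>v1 \<in> F (\<phi> t)\<close>] unfolding \<psi>_def by blast
    have "norm ((v1 - u) + w + c) \<le> norm (v1 - u) + norm w + norm c"
      by (metis norm_triangle_ineq order_trans add_right_mono)
    then have "norm ((v1 - u) + w + c) \<le> e' (\<psi> t)"
      using \<open>norm w \<le> e (\<phi> t)\<close> \<open>norm (v1 - u) + e (\<phi> t) + norm c \<le> e' (\<psi> t)\<close> by linarith
    moreover have "v + c = u + ((v1 - u) + w + c)"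
      using \<open>v = v1 + w\<close> by (simp add: algebra_simps)
    ultimately show ?thesis
      using \<open>u \<in> F (\<psi> t)\<close> unfolding infl_def by blast
  qed
  moreover have "abs_cont_on {a..b} \<psi>"
    unfolding \<psi>_def by (rule abs_cont_on_add[OF is_sol_IccD(2)[OF sol] abs_cont_on_affine])
  ultimately show ?thesis
    using is_sol_IccD(1)[OF sol] \<open>negligible N\<close> unfolding \<psi>_def
    by (intro is_sol_IccI[where N = N]) auto
qed

lemma affine_interpolation:
  fixes a b :: "'a::real_normed_vector"
  assumes "t0 < t1" "norm a < \<delta>" "norm b < \<delta>"
  obtains c d where "t0 *\<^sub>R c + d = a" "t1 *\<^sub>R c + d = b" "norm c * (t1 - t0) < 2 * \<delta>"
    "\<And>t. t \<in> {t0..t1} \<Longrightarrow> norm (t *\<^sub>R c + d) < 3 * \<delta>"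
proof
  define c where "c = (1 / (t1 - t0)) *\<^sub>R (b - a)"
  have Tc: "(t1 - t0) *\<^sub>R c = b - a"
    using assms(1) unfolding c_def by simp
  show "t0 *\<^sub>R c + (a - t0 *\<^sub>R c) = a"
    by simp
  show "t1 *\<^sub>R c + (a - t0 *\<^sub>R c) = b"
    using Tc by (simp add: algebra_simps)
  have "norm c * (t1 - t0) = norm (b - a)"
    using Tc assms(1) by (metis abs_of_pos diff_gt_0_iff_gt mult.commute norm_scaleR)
  also have "\<dots> < 2 * \<delta>"
    using norm_triangle_ineq4[of b a] assms(2,3) by linarith
  finally show bound: "norm c * (t1 - t0) < 2 * \<delta>" .
  fix t assume "t \<in> {t0..t1}"
  then have "norm ((t - t0) *\<^sub>R c) \<le> norm c * (t1 - t0)"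
    by (simp add: mult.commute mult_left_mono)
  have "norm (t *\<^sub>R c + (a - t0 *\<^sub>R c)) = norm ((t - t0) *\<^sub>R c + a)"
    by (simp add: algebra_simps)
  also have "\<dots> \<le> norm ((t - t0) *\<^sub>R c) + norm a"
    by (rule norm_triangle_ineq)
  also have "\<dots> < 3 * \<delta>"
    using \<open>norm ((t - t0) *\<^sub>R c) \<le> norm c * (t1 - t0)\<close> bound assms(2) by linarith
  finally show "norm (t *\<^sub>R c + (a - t0 *\<^sub>R c)) < 3 * \<delta>" .
qed

section \<open>Forward contractivity of the reachable set\<close>

lemma interior_subset_closure: "interior S \<subseteq> closure S"
  by (rule order_trans[OF interior_subset closure_subset])

locale inflation_margin =
  fixes F :: "'a::euclidean_space \<Rightarrow> 'a set" and eps ebar :: "'a \<Rightarrow> real"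
  assumes F_cont: "sv_continuous F" and F_compact: "\<And>x. compact (F x)"
    and eps_cont: "continuous_on UNIV eps" and ebar_cont: "continuous_on UNIV ebar"
    and eps_less_ebar: "\<And>x. eps x < ebar x"
begin

lemma uniformly_close_on_compact:
  assumes "compact C" "\<eta> > 0"
  shows "\<exists>e>0. \<forall>x\<in>C. \<forall>y. dist x y < e \<longrightarrow>
    (\<forall>v\<in>F x. \<exists>u\<in>F y. dist v u < \<eta>) \<and> \<bar>ebar x - ebar y\<bar> < \<eta>"
proof (rule compact_uniform_from_local[OF \<open>compact C\<close>])
  fix x0
  have "usc_at F x0" "lsc_at F x0"
    using F_cont unfolding sv_continuous_def by auto
  from usc_lsc_at_imp_locally_close[OF this F_compact \<open>\<eta> > 0\<close>]
  obtain r1 where "r1 > 0"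
    and r1: "\<forall>x\<in>ball x0 r1. \<forall>y\<in>ball x0 r1. \<forall>v\<in>F x. \<exists>u\<in>F y. dist v u < \<eta>"
    by blast
  obtain r2 where "r2 > 0" and r2: "\<forall>x. dist x x0 < r2 \<longrightarrow> dist (ebar x) (ebar x0) < \<eta>/2"
    using ebar_cont \<open>\<eta> > 0\<close> unfolding continuous_on_iff by (meson UNIV_I half_gt_zero)
  have "\<bar>ebar x - ebar y\<bar> < \<eta>" if "x \<in> ball x0 r2" "y \<in> ball x0 r2" for x y
  proof -
    have "dist (ebar x) (ebar x0) < \<eta>/2" "dist (ebar y) (ebar x0) < \<eta>/2"
      using r2 that by (auto simp: dist_commute)
    then show ?thesis
      using dist_triangle_half_l[of "ebar x" "ebar x0" \<eta> "ebar y"] by (simp add: dist_real_def)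
  qed
  then show "\<exists>r>0. \<forall>x\<in>ball x0 r. \<forall>y\<in>ball x0 r.
      (\<forall>v\<in>F x. \<exists>u\<in>F y. dist v u < \<eta>) \<and> \<bar>ebar x - ebar y\<bar> < \<eta>"
    using \<open>r1 > 0\<close> \<open>r2 > 0\<close> r1 by (intro exI[of _ "min r1 r2"]) auto
qed

lemma margin_on_compact:
  assumes "compact C"
  shows "\<exists>m>0. \<forall>x\<in>C. eps x + m \<le> ebar x"
proof (cases "C = {}")
  case False
  have "continuous_on C (\<lambda>x. ebar x - eps x)"
    by (intro continuous_on_diff continuous_on_subset[OF ebar_cont] continuous_on_subset[OF eps_cont])
      auto
  then obtain xm where "xm \<in> C" and xm: "\<forall>x\<in>C. ebar xm - eps xm \<le> ebar x - eps x"
    using continuous_attains_inf[OF \<open>compact C\<close> False] by blast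
  then show ?thesis
    using eps_less_ebar[of xm] by (intro exI[of _ "ebar xm - eps xm"]) force
qed (intro exI[of _ 1], simp)

text \<open>The margin \<open>m\<close> absorbs both the slope of the affine correction and the variation of
  \<open>F\<close> and \<open>ebar\<close>.\<close>
lemma is_sol_Icc_affine_correction:
  assumes sol: "is_sol_Icc (infl F eps) t0 t1 \<phi>"
    and margin: "\<forall>x\<in>\<phi> ` {t0..t1}. eps x + m \<le> ebar x"
    and close: "\<forall>x\<in>\<phi> ` {t0..t1}. \<forall>y. dist x y < e \<longrightarrow>
      (\<forall>v\<in>F x. \<exists>u\<in>F y. dist v u < m/4) \<and> \<bar>ebar x - ebar y\<bar> < m/4"
    and "norm c < m/4" and small: "\<And>t. t \<in> {t0..t1} \<Longrightarrow> norm (t *\<^sub>R c + d) < e"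
  shows "is_sol_Icc (infl F ebar) t0 t1 (\<lambda>t. \<phi> t + (t *\<^sub>R c + d))"
proof (rule is_sol_Icc_infl_add_affine[OF sol])
  fix t v assume t: "t \<in> {t0..t1}" and v: "v \<in> F (\<phi> t)"
  have "dist (\<phi> t) (\<phi> t + (t *\<^sub>R c + d)) = norm (t *\<^sub>R c + d)"
    by (metis add_diff_cancel_left' dist_commute dist_norm)
  then have "dist (\<phi> t) (\<phi> t + (t *\<^sub>R c + d)) < e"
    using small[OF t] by linarith
  moreover have "\<phi> t \<in> \<phi> ` {t0..t1}"
    using t by blast
  ultimately obtain u where u: "u \<in> F (\<phi> t + (t *\<^sub>R c + d))" "dist v u < m/4"
    and "\<bar>ebar (\<phi> t) - ebar (\<phi> t + (t *\<^sub>R c + d))\<bar> < m/4"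
    using close v by blast
  then have "ebar (\<phi> t) < ebar (\<phi> t + (t *\<^sub>R c + d)) + m/4"
    by linarith
  moreover have "eps (\<phi> t) + m \<le> ebar (\<phi> t)"
    using margin \<open>\<phi> t \<in> \<phi> ` {t0..t1}\<close> by blast
  ultimately have "norm (v - u) + eps (\<phi> t) + norm c \<le> ebar (\<phi> t + (t *\<^sub>R c + d))"
    using u(2) \<open>norm c < m/4\<close> norm_ge_zero[of c] unfolding dist_norm by linarith
  then show "\<exists>u\<in>F (\<phi> t + (t *\<^sub>R c + d)).
      norm (v - u) + eps (\<phi> t) + norm c \<le> ebar (\<phi> t + (t *\<^sub>R c + d))"
    using u(1) by blast
qed

lemma is_sol_Icc_steer_endpoints:
  assumes sol: "is_sol_Icc (infl F eps) t0 t1 \<phi>" and "t0 < t1"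
  shows "\<exists>\<delta>>0. \<forall>z y. dist z (\<phi> t0) < \<delta> \<longrightarrow> dist y (\<phi> t1) < \<delta> \<longrightarrow>
    (\<exists>p. is_sol_Icc (infl F ebar) t0 t1 p \<and> p t0 = z \<and> p t1 = y)"
proof -
  have "compact (\<phi> ` {t0..t1})"
    using abs_cont_on_imp_continuous_on[OF is_sol_IccD(2)[OF sol]]
    by (rule compact_continuous_image[OF _ compact_Icc])
  then obtain m where "m > 0" and margin: "\<forall>x\<in>\<phi> ` {t0..t1}. eps x + m \<le> ebar x"
    using margin_on_compact by blast
  obtain e where "e > 0" and close: "\<forall>x\<in>\<phi> ` {t0..t1}. \<forall>y. dist x y < e \<longrightarrow>
      (\<forall>v\<in>F x. \<exists>u\<in>F y. dist v u < m/4) \<and> \<bar>ebar x - ebar y\<bar> < m/4"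
    using uniformly_close_on_compact[OF \<open>compact (\<phi> ` {t0..t1})\<close>, of "m/4"] \<open>m > 0\<close> by auto
  define \<delta> where "\<delta> = min (e/3) (m * (t1 - t0) / 8)"
  have "\<exists>p. is_sol_Icc (infl F ebar) t0 t1 p \<and> p t0 = z \<and> p t1 = y"
    if z: "dist z (\<phi> t0) < \<delta>" and y: "dist y (\<phi> t1) < \<delta>" for z y
  proof -
    obtain c d where cd: "t0 *\<^sub>R c + d = z - \<phi> t0" "t1 *\<^sub>R c + d = y - \<phi> t1"
      "norm c * (t1 - t0) < 2 * \<delta>" "\<And>t. t \<in> {t0..t1} \<Longrightarrow> norm (t *\<^sub>R c + d) < 3 * \<delta>"
      using affine_interpolation[OF \<open>t0 < t1\<close>, of "z - \<phi> t0" \<delta> "y - \<phi> t1"] z y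
      by (auto simp: dist_norm)
    have "norm c * (t1 - t0) < m/4 * (t1 - t0)"
      using cd(3) unfolding \<delta>_def by linarith
    then have "norm c < m/4"
      using \<open>t0 < t1\<close> by simp
    moreover have "norm (t *\<^sub>R c + d) < e" if "t \<in> {t0..t1}" for t
      using cd(4)[OF that] unfolding \<delta>_def by linarith
    ultimately have "is_sol_Icc (infl F ebar) t0 t1 (\<lambda>t. \<phi> t + (t *\<^sub>R c + d))"
      by (rule is_sol_Icc_affine_correction[OF sol margin close])
    then show ?thesis
      using cd(1,2) by (intro exI[of _ "\<lambda>t. \<phi> t + (t *\<^sub>R c + d)"]) auto
  qed
  moreover have "\<delta> > 0"
    using \<open>e > 0\<close> \<open>m > 0\<close> \<open>t0 < t1\<close> unfolding \<delta>_def by simp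
  ultimately show ?thesis
    by blast
qed

lemma is_sol_Icc_from_closure_enters_interior:
  assumes sol: "is_sol_Icc (infl F eps) t0 t1 \<phi>" and "t0 < t1"
    and "\<phi> t0 \<in> closure (Kset F ebar Xo)"
  shows "\<phi> t1 \<in> interior (Kset F ebar Xo)"
proof -
  obtain \<delta> where "\<delta> > 0" and steer: "\<forall>z y. dist z (\<phi> t0) < \<delta> \<longrightarrow> dist y (\<phi> t1) < \<delta> \<longrightarrow>
      (\<exists>p. is_sol_Icc (infl F ebar) t0 t1 p \<and> p t0 = z \<and> p t1 = y)"
    using is_sol_Icc_steer_endpoints[OF sol \<open>t0 < t1\<close>] by blast
  obtain z where "z \<in> Kset F ebar Xo" "dist z (\<phi> t0) < \<delta>"
    using assms(3) \<open>\<delta> > 0\<close> unfolding closure_approachable by blast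
  have "ball (\<phi> t1) \<delta> \<subseteq> Kset F ebar Xo"
  proof
    fix y assume "y \<in> ball (\<phi> t1) \<delta>"
    then obtain p where "is_sol_Icc (infl F ebar) t0 t1 p" "p t0 = z" "p t1 = y"
      using steer \<open>dist z (\<phi> t0) < \<delta>\<close> by (auto simp: dist_commute)
    then show "y \<in> Kset F ebar Xo"
      using Kset_is_sol_Icc_endpoint[OF \<open>z \<in> Kset F ebar Xo\<close>] by blast
  qed
  then show ?thesis
    using \<open>\<delta> > 0\<close> mem_interior by blast
qed

lemma is_sol_from_closure_enters_interior:
  assumes "is_sol (infl F eps) I \<phi>" "s \<in> I" "t \<in> I" "s < t" "\<phi> s \<in> closure (Kset F ebar Xo)"
  shows "\<phi> t \<in> interior (Kset F ebar Xo)"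
  using is_sol_Icc_from_closure_enters_interior[OF is_sol_imp_is_sol_Icc[OF assms(1-3)]] assms(4,5)
  by simp

lemma is_sol_infl_neg_from_closure_starts_in_interior:
  assumes sol: "is_sol (infl_neg F eps) I \<phi>" and "t \<in> I" "0 < t"
    and "\<phi> t \<in> closure (Kset F ebar Xo)"
  shows "\<phi> 0 \<in> interior (Kset F ebar Xo)"
proof -
  have "0 \<in> I"
    using sol unfolding is_sol_def by blast
  then have "is_sol_Icc (infl F eps) (-t) 0 (\<lambda>s. \<phi> (- s))"
    using is_sol_Icc_reflect[OF is_sol_imp_is_sol_Icc[OF sol \<open>0 \<in> I\<close> \<open>t \<in> I\<close>]] \<open>0 < t\<close> by simp
  then show ?thesis
    using is_sol_Icc_from_closure_enters_interior[of "-t" 0 "\<lambda>s. \<phi> (- s)"] assms(3,4) by simp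
qed

lemma forward_contractive_closure_Kset:
  "forward_contractive (infl F eps) (closure (Kset F ebar Xo))"
  unfolding forward_contractive_def forward_invariant_def
proof (intro conjI allI impI ballI)
  fix I \<phi> t assume "is_sol (infl F eps) I \<phi> \<and> \<phi> 0 \<in> closure (Kset F ebar Xo)" "t \<in> I" "0 \<le> t"
  moreover have "0 \<in> I"
    using calculation unfolding is_sol_def by blast
  ultimately show "\<phi> t \<in> closure (Kset F ebar Xo)"
    using is_sol_from_closure_enters_interior[of I \<phi> 0 t] interior_subset_closure
    by (cases "t = 0") auto
next
  fix xo p assume xo: "xo \<in> frontier (closure (Kset F ebar Xo))"
    and "p \<in> Sols (infl F eps) xo"
  then obtain I \<phi> where p: "p = (I, \<phi>)" "is_sol (infl F eps) I \<phi>" "\<phi> 0 = xo"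
    unfolding Sols_def is_max_sol_def by auto
  have "\<phi> 0 \<in> closure (Kset F ebar Xo)" "0 \<in> I"
    using xo p(2,3) unfolding frontier_def is_sol_def by auto
  then have "\<phi> t \<in> interior (closure (Kset F ebar Xo))" if "t \<in> I" "0 < t" for t
    using is_sol_from_closure_enters_interior[OF p(2) _ that(1) that(2)]
      interior_mono[OF closure_subset] by blast
  then show "case p of (I, \<phi>) \<Rightarrow> \<exists>T>0. \<forall>t\<in>I \<inter> {0<..T}. \<phi> t \<in> interior (closure (Kset F ebar Xo))"
    unfolding p(1) by (intro case_prodI exI[of _ 1]) auto
qed simp

lemma forward_contractive_compl_interior_Kset:
  "forward_contractive (infl_neg F eps) (- interior (Kset F ebar Xo))"
  unfolding forward_contractive_def forward_invariant_def
proof (intro conjI allI impI ballI)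
  fix I \<phi> t assume "is_sol (infl_neg F eps) I \<phi> \<and> \<phi> 0 \<in> - interior (Kset F ebar Xo)" "t \<in> I" "0 \<le> t"
  then show "\<phi> t \<in> - interior (Kset F ebar Xo)"
    using is_sol_infl_neg_from_closure_starts_in_interior[of I \<phi> t] interior_subset_closure
    by (cases "t = 0") auto
next
  fix xo p assume xo: "xo \<in> frontier (- interior (Kset F ebar Xo))"
    and "p \<in> Sols (infl_neg F eps) xo"
  then obtain I \<phi> where p: "p = (I, \<phi>)" "is_sol (infl_neg F eps) I \<phi>" "\<phi> 0 = xo"
    unfolding Sols_def is_max_sol_def by auto
  have "\<phi> 0 \<notin> interior (Kset F ebar Xo)"
    using xo p(3) unfolding frontier_def by (simp add: closure_complement)
  then have "\<phi> t \<notin> closure (interior (Kset F ebar Xo))" if "t \<in> I" "0 < t" for t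
    using is_sol_infl_neg_from_closure_starts_in_interior[OF p(2) that]
      closure_mono[OF interior_subset] by blast
  then show "case p of (I, \<phi>) \<Rightarrow> \<exists>T>0. \<forall>t\<in>I \<inter> {0<..T}. \<phi> t \<in> interior (- interior (Kset F ebar Xo))"
    unfolding p(1) interior_complement by (intro case_prodI exI[of _ 1]) auto
qed (simp add: closed_Compl)

lemma is_sol_from_interior_avoids_frontier:
  assumes "is_sol (infl F eps) I \<phi>" "\<phi> 0 \<in> interior (Kset F ebar Xo)" "t \<in> I" "0 < t"
  shows "\<phi> t \<notin> frontier (Kset F ebar Xo)"
proof -
  have "0 \<in> I"
    using assms(1) unfolding is_sol_def by blast
  then show ?thesis
    using is_sol_from_closure_enters_interior[OF assms(1) _ assms(3,4)] assms(2)
      interior_subset_closure unfolding frontier_def by blast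
qed

lemma is_sol_from_exterior_avoids_frontier_backward:
  assumes sol: "is_sol (infl F eps) I \<phi>" and "\<phi> 0 \<notin> closure (Kset F ebar Xo)" "t \<in> I" "t < 0"
  shows "\<phi> t \<notin> frontier (Kset F ebar Xo)"
proof
  assume "\<phi> t \<in> frontier (Kset F ebar Xo)"
  moreover have "0 \<in> I"
    using sol unfolding is_sol_def by blast
  ultimately have "\<phi> 0 \<in> interior (Kset F ebar Xo)"
    using is_sol_from_closure_enters_interior[OF sol \<open>t \<in> I\<close> _ \<open>t < 0\<close>]
    unfolding frontier_def by blast
  then show False
    using assms(2) interior_subset_closure by blast
qed

end

theorem lemma7:
  fixes F :: "'a::euclidean_space \<Rightarrow> 'a set"
    and Xo :: "'a set"
    and ebar :: "'a \<Rightarrow> real"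
  assumes F_cont: "sv_continuous F"
    and F_ne: "\<And>x. F x \<noteq> {}"
    and F_compact: "\<And>x. compact (F x)"
    and F_convex: "\<And>x. convex (F x)"
    and fc: "forward_complete F"
    and ebar_cont: "continuous_on UNIV ebar"
    and ebar_pos: "\<And>x. ebar x > 0"
  shows "\<forall>eps :: 'a \<Rightarrow> real. continuous_on UNIV eps \<and> (\<forall>x. 0 \<le> eps x \<and> eps x < ebar x) \<longrightarrow>
     forward_contractive (infl F eps) (closure (Kset F ebar Xo)) \<and>
     forward_contractive (infl_neg F eps) (- interior (Kset F ebar Xo)) \<and>
     (\<forall>I \<phi>. is_sol (infl F eps) I \<phi> \<and> \<phi> 0 \<in> interior (Kset F ebar Xo) \<longrightarrow>
        (\<forall>t\<in>I. t > 0 \<longrightarrow> \<phi> t \<notin> frontier (Kset F ebar Xo))) \<and>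
     (\<forall>I \<phi>. is_sol (infl F eps) I \<phi> \<and> \<phi> 0 \<in> - closure (Kset F ebar Xo) \<longrightarrow>
        (\<forall>t\<in>I. t < 0 \<longrightarrow> \<phi> t \<notin> frontier (Kset F ebar Xo)))"
proof (intro allI impI, goal_cases)
  case (1 eps)
  then interpret inflation_margin F eps ebar
    using F_cont F_compact ebar_cont by unfold_locales auto
  show ?case
    using forward_contractive_closure_Kset forward_contractive_compl_interior_Kset
      is_sol_from_interior_avoids_frontier is_sol_from_exterior_avoids_frontier_backward
    by (intro conjI allI impI ballI) auto
qed

end
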